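(* Let $g=\prod_{i=1}^e g_i\in\mathbb{F}_2[X]$ with $g\mid X^n-1$, where $g_1,\dots,g_e$ are distinct irreducible polynomials, and for each $i$ let $\alpha_i$ be a root of $g_i$ in its splitting field. For $f\in\mathbb{F}_2[X]$ and $0\le i\le n-1$ set $\mathrm{LC}(i,f)=(\alpha_1^if(\alpha_1),\alpha_2^if(\alpha_2),\dots,\alpha_e^if(\alpha_e))$ and $\mathrm{LC}(f)=\{\mathrm{LC}(i,f):0\le i\le n-1\}$. Then for $f_1,f_2\in\mathbb{F}_2[X]$, $\mathrm{LC}(f_1)=\mathrm{LC}(f_2)$ if and only if $f_1(X)\equiv X^kf_2(X)\pmod{g(X)}$ for some integer $k\ge 0$.
   Context: $\mathrm{LC}(i,f)$ is the value of the linear combination, with coefficients given by the coefficients of $f$, of consecutive columns starting at column $i$ of the parity-check matrix whose $j$-th column is $(\alpha_1^j,\dots,\alpha_e^j)$ of the binary cyclic code generated by $g$. *)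

theory Defs
  imports "HOL-Computational_Algebra.Polynomial" "HOL-Library.Z2" "HOL-Number_Theory.Cong"
begin

definition eval2 :: "bit poly \<Rightarrow> 'K::field \<Rightarrow> 'K" where
  "eval2 f a = poly (map_poly of_bit f) a"

definition LC :: "'K::field list \<Rightarrow> nat \<Rightarrow> bit poly \<Rightarrow> 'K list" where
  "LC alphas i f = map (\<lambda>a. a ^ i * eval2 f a) alphas"

definition LCset :: "'K::field list \<Rightarrow> nat \<Rightarrow> bit poly \<Rightarrow> 'K list set" where
  "LCset alphas n f = (\<lambda>i. LC alphas i f) ` {0..<n}"

end

theory Submission
  imports Defs
begin

text \<open>Each \<open>g\<^sub>i\<close> is the minimal polynomial of \<open>\<alpha>\<^sub>i\<close> over \<open>\<bbbF>\<^sub>2\<close>, hence a prime element, so the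
  distinct \<open>g\<^sub>i\<close> divide \<open>p\<close> jointly, i.e. \<open>g\<close> divides \<open>p\<close>, exactly when \<open>p\<close> vanishes at every
  \<open>\<alpha>\<^sub>i\<close>. Consequently every \<open>\<alpha>\<^sub>i\<close> is an \<open>n\<close>-th root of unity, and
  \<open>f\<^sub>1 \<equiv> X\<^sup>k f\<^sub>2 (mod g)\<close> says precisely \<open>LC(0,f\<^sub>1) = LC(k,f\<^sub>2)\<close>. Since \<open>LC(i,f)\<close> is
  \<open>n\<close>-periodic in \<open>i\<close> and a coincidence \<open>LC(j,f\<^sub>1) = LC(k,f\<^sub>2)\<close> persists when both indices
  are shifted by the same amount, one such coincidence makes the two orbits \<open>LC(f\<^sub>1)\<close> and
  \<open>LC(f\<^sub>2)\<close> equal.\<close>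

lemma two_eq_zero_if_CHAR_2:
  assumes "CHAR('K::field) = 2"
  shows "(2::'K) = 0"
  using of_nat_CHAR[where 'a = 'K] assms by simp

lemma eval2_add:
  assumes "CHAR('K::field) = 2"
  shows "eval2 (p + q) (x::'K) = eval2 p x + eval2 q x"
proof -
  have "map_poly (of_bit :: bit \<Rightarrow> 'K) (p + q) = map_poly of_bit p + map_poly of_bit q"
    by (rule poly_eqI) (simp add: coeff_map_poly two_eq_zero_if_CHAR_2[OF assms])
  then show ?thesis by (simp add: eval2_def)
qed

lemma eval2_diff:
  assumes "CHAR('K::field) = 2"
  shows "eval2 (p - q) (x::'K) = eval2 p x - eval2 q x"
proof -
  have "map_poly (of_bit :: bit \<Rightarrow> 'K) (p - q) = map_poly of_bit p - map_poly of_bit q"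
    by (rule poly_eqI) (simp add: coeff_map_poly two_eq_zero_if_CHAR_2[OF assms])
  then show ?thesis by (simp add: eval2_def)
qed

lemma eval2_pCons: "eval2 (pCons a p) (x::'K::field) = of_bit a + x * eval2 p x"
  by (simp add: eval2_def map_poly_pCons)

lemma eval2_mult:
  assumes "CHAR('K::field) = 2"
  shows "eval2 (p * q) (x::'K) = eval2 p x * eval2 q x"
proof (induction p)
  case 0
  then show ?case by (simp add: eval2_def)
next
  case (pCons a p)
  have "pCons a p * q = smult a q + pCons 0 (p * q)"
    by simp
  moreover have "eval2 (smult a q) x = of_bit a * eval2 q x"
    by (cases a) (auto simp: eval2_def)
  ultimately show ?case
    using pCons by (simp add: eval2_add[OF assms] eval2_pCons algebra_simps)
qed

lemma eval2_1 [simp]: "eval2 1 (x::'K::field) = 1"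
  by (simp add: eval2_def)

lemma eval2_monom_1 [simp]: "eval2 (monom 1 k) (x::'K::field) = x ^ k"
  by (simp add: eval2_def map_poly_monom poly_monom)

lemma eval2_eq_0_if_dvd:
  assumes "CHAR('K::field) = 2" "h dvd p" "eval2 h (x::'K) = 0"
  shows "eval2 p x = 0"
  using assms(2,3) by (auto simp: eval2_mult[OF assms(1)] elim!: dvdE)

lemma is_unit_bit_poly_iff: "is_unit (u::bit poly) \<longleftrightarrow> u = 1"
proof
  assume "is_unit u"
  then obtain c where "u = [:c:]" "c dvd 1"
    by (auto simp: is_unit_poly_iff)
  then show "u = 1"
    by (cases c) (auto simp: one_pCons)
qed simp

lemma irreducible_bit_poly_dvd_imp_eq:
  assumes "irreducible (h::bit poly)" "irreducible p" "h dvd p"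
  shows "h = p"
proof -
  obtain u where u: "p = h * u"
    using assms(3) ..
  then have "is_unit u"
    using irreducibleD[OF assms(2) u] irreducible_not_unit[OF assms(1)] by blast
  with u show ?thesis
    by (simp add: is_unit_bit_poly_iff)
qed

lemma dvd_if_eval2_eq_0_of_least_degree:
  assumes "CHAR('K::field) = 2" "m \<noteq> 0" "eval2 m (x::'K) = 0"
    and least: "\<And>q. q \<noteq> 0 \<Longrightarrow> eval2 q x = 0 \<Longrightarrow> degree m \<le> degree q"
    and "eval2 p x = 0"
  shows "m dvd p"
proof -
  have "p = p div m * m + p mod m"
    by simp
  then have "eval2 (p mod m) x = 0"
    using assms(3,5) by (metis eval2_add[OF assms(1)] eval2_mult[OF assms(1)] mult_zero_right add_0)
  moreover have "p mod m = 0 \<or> degree (p mod m) < degree m"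
    using degree_mod_less[OF assms(2)] .
  ultimately have "p mod m = 0"
    using least by (meson leD)
  then show ?thesis
    by (simp add: mod_eq_0_iff_dvd)
qed

lemma irreducible_dvd_if_common_root:
  assumes "CHAR('K::field) = 2" "irreducible h" "eval2 h (x::'K) = 0" "eval2 p x = 0"
  shows "h dvd p"
proof -
  let ?vanishing = "\<lambda>q. q \<noteq> 0 \<and> eval2 q x = 0"
  obtain m where m: "?vanishing m" and least: "\<And>q. ?vanishing q \<Longrightarrow> degree m \<le> degree q"
    using ex_has_least_nat[of ?vanishing h degree] assms(2,3) by (metis not_irreducible_zero)
  have m_dvd: "m dvd q" if "eval2 q x = 0" for q
    using dvd_if_eval2_eq_0_of_least_degree[OF assms(1)] m least that by blast
  have "\<not> is_unit m"
    using m by (auto simp: is_unit_bit_poly_iff)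
  moreover obtain u where u: "h = m * u"
    using m_dvd[OF assms(3)] ..
  ultimately have "is_unit u"
    using irreducibleD[OF assms(2)] by blast
  with u have "h = m"
    by (simp add: is_unit_bit_poly_iff)
  with m_dvd[OF assms(4)] show ?thesis
    by simp
qed

lemma prime_elem_if_irreducible_root:
  assumes "CHAR('K::field) = 2" "irreducible h" "eval2 h (x::'K) = 0"
  shows "prime_elem h"
proof (rule prime_elemI)
  show "h \<noteq> 0" "\<not> is_unit h"
    using assms(2) by (auto simp: irreducible_def)
  fix a b
  assume "h dvd a * b"
  then have "eval2 (a * b) x = 0"
    by (rule eval2_eq_0_if_dvd[OF assms(1) _ assms(3)])
  then have "eval2 a x = 0 \<or> eval2 b x = 0"
    by (simp add: eval2_mult[OF assms(1)])
  then show "h dvd a \<or> h dvd b"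
    using irreducible_dvd_if_common_root[OF assms] by blast
qed

lemma prime_elem_dvd_prod_list_iff:
  fixes p :: "'a::comm_semiring_1"
  assumes "prime_elem p"
  shows "p dvd prod_list qs \<longleftrightarrow> (\<exists>q\<in>set qs. p dvd q)"
  using assms by (induction qs) (simp_all add: prime_elem_dvd_mult_iff prime_elem_not_unit)

lemma prod_list_dvd_if_prime_elems_dvd:
  fixes x :: "'a::comm_semiring_1"
  assumes "\<forall>p\<in>set ps. prime_elem p" "\<forall>p\<in>set ps. \<forall>q\<in>set ps. p dvd q \<longrightarrow> p = q"
    and "distinct ps" "\<forall>p\<in>set ps. p dvd x"
  shows "prod_list ps dvd x"
  using assms
proof (induction ps)
  case Nil
  then show ?case by simp
next
  case (Cons p ps)
  then obtain y where y: "x = prod_list ps * y"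
    by (auto elim: dvdE)
  have "\<not> p dvd prod_list ps"
    using Cons.prems by (auto simp: prime_elem_dvd_prod_list_iff)
  with Cons.prems y have "p dvd y"
    by (simp add: prime_elem_dvd_mult_iff)
  with y show ?case
    by (simp add: mult.commute mult_dvd_mono)
qed

lemma prod_list_dvd_iff_common_roots:
  fixes gs :: "bit poly list" and alphas :: "'K::field list"
  assumes "CHAR('K) = 2" "length alphas = length gs" "distinct gs"
    and "\<forall>h\<in>set gs. irreducible h" "\<forall>i<length gs. eval2 (gs ! i) (alphas ! i) = 0"
  shows "prod_list gs dvd p \<longleftrightarrow> (\<forall>a\<in>set alphas. eval2 p a = 0)"
proof
  assume "prod_list gs dvd p"
  show "\<forall>a\<in>set alphas. eval2 p a = 0"
  proof
    fix a
    assume "a \<in> set alphas"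
    then obtain i where i: "i < length gs" "a = alphas ! i"
      using assms(2) by (auto simp: in_set_conv_nth)
    then have "gs ! i dvd p"
      using \<open>prod_list gs dvd p\<close> by (meson dvd_trans nth_mem prod_list_dvd)
    with i assms(5) show "eval2 p a = 0"
      using eval2_eq_0_if_dvd[OF assms(1)] by blast
  qed
next
  assume roots: "\<forall>a\<in>set alphas. eval2 p a = 0"
  have prime_dvd: "prime_elem h" "h dvd p" if "h \<in> set gs" for h
  proof -
    obtain i where i: "i < length gs" "h = gs ! i"
      using \<open>h \<in> set gs\<close> by (auto simp: in_set_conv_nth)
    then have "irreducible h" "eval2 h (alphas ! i) = 0" "eval2 p (alphas ! i) = 0"
      using assms(2,4,5) roots that by auto
    then show "prime_elem h" "h dvd p"
      using prime_elem_if_irreducible_root[OF assms(1)] irreducible_dvd_if_common_root[OF assms(1)]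
      by blast+
  qed
  have pairwise: "\<forall>h\<in>set gs. \<forall>h'\<in>set gs. h dvd h' \<longrightarrow> h = h'"
    using assms(4) irreducible_bit_poly_dvd_imp_eq by blast
  show "prod_list gs dvd p"
    by (rule prod_list_dvd_if_prime_elems_dvd) (use prime_dvd pairwise assms(3) in auto)
qed

lemma eval2_X_pow_minus_1:
  assumes "CHAR('K::field) = 2"
  shows "eval2 ([:-1:] + monom 1 n) (x::'K) = x ^ n - 1"
proof -
  have "[:-1:] + monom 1 n = 1 + (monom 1 n :: bit poly)"
    by (simp add: one_pCons)
  then have "eval2 ([:-1:] + monom 1 n) x = 1 + x ^ n"
    by (simp only: eval2_add[OF assms] eval2_1 eval2_monom_1)
  also have "\<dots> = x ^ n - 1"
    using two_eq_zero_if_CHAR_2[OF assms] by (simp add: eq_diff_eq algebra_simps)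
  finally show ?thesis .
qed

lemma LC_mod:
  assumes "\<forall>a\<in>set alphas. a ^ n = 1"
  shows "LC alphas (i mod n) f = LC alphas i f"
proof -
  have "a ^ (i mod n) = a ^ i" if "a \<in> set alphas" for a
  proof -
    have "a ^ i = a ^ (i mod n) * (a ^ n) ^ (i div n)"
      by (metis mod_div_mult_eq power_add power_mult mult.commute)
    with assms that show ?thesis
      by simp
  qed
  then show ?thesis
    by (simp add: LC_def)
qed

lemma LCset_eq_range_LC:
  assumes "n > 0" "\<forall>a\<in>set alphas. a ^ n = 1"
  shows "LCset alphas n f = range (\<lambda>i. LC alphas i f)"
proof
  show "LCset alphas n f \<subseteq> range (\<lambda>i. LC alphas i f)"
    by (auto simp: LCset_def)
  show "range (\<lambda>i. LC alphas i f) \<subseteq> LCset alphas n f"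
  proof (rule image_subsetI)
    fix i
    have "LC alphas i f = LC alphas (i mod n) f"
      using LC_mod[OF assms(2)] by simp
    with assms(1) show "LC alphas i f \<in> LCset alphas n f"
      by (auto simp: LCset_def)
  qed
qed

lemma LC_shift:
  assumes "LC alphas j f1 = LC alphas k f2"
  shows "LC alphas (i + j) f1 = LC alphas (i + k) f2"
  using assms unfolding LC_def map_eq_conv by (simp add: power_add mult.assoc)

lemma range_LC_eq_iff:
  assumes "n > 0" "\<forall>a\<in>set alphas. a ^ n = 1"
  shows "range (\<lambda>i. LC alphas i f1) = range (\<lambda>i. LC alphas i f2) \<longleftrightarrow>
    (\<exists>k. LC alphas 0 f1 = LC alphas k f2)"
proof
  assume "range (\<lambda>i. LC alphas i f1) = range (\<lambda>i. LC alphas i f2)"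
  then have "LC alphas 0 f1 \<in> range (\<lambda>i. LC alphas i f2)"
    by (metis rangeI)
  then show "\<exists>k. LC alphas 0 f1 = LC alphas k f2"
    by auto
next
  assume "\<exists>k. LC alphas 0 f1 = LC alphas k f2"
  then obtain k where shift: "LC alphas i f1 = LC alphas (i + k) f2" for i
    using LC_shift[where j = 0] by fastforce
  show "range (\<lambda>i. LC alphas i f1) = range (\<lambda>i. LC alphas i f2)"
  proof (intro equalityI image_subsetI)
    fix i
    show "LC alphas i f1 \<in> range (\<lambda>i. LC alphas i f2)"
      by (simp add: shift)
  next
    fix j
    \<comment> \<open>Adding the period multiple \<open>n * k\<close> first makes the backward shift by \<open>k\<close> exact in \<open>nat\<close>.\<close>
    have "LC alphas j f2 = LC alphas (j + n * k) f2"
      using LC_mod[OF assms(2)] by (metis mod_mult_self2)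
    also have "\<dots> = LC alphas (j + n * k - k) f1"
    proof -
      have "k \<le> n * k"
        using assms(1) by simp
      then have "j + n * k - k + k = j + n * k"
        by linarith
      then show ?thesis
        using shift[of "j + n * k - k"] by simp
    qed
    finally show "LC alphas j f2 \<in> range (\<lambda>i. LC alphas i f1)"
      by simp
  qed
qed

theorem lemma1:
  fixes gs :: "bit poly list" and alphas :: "'K::field list" and g f1 f2 :: "bit poly" and n :: nat
  assumes "CHAR('K) = 2"
    and "n \<ge> 1"
    and "length alphas = length gs"
    and "distinct gs"
    and "\<forall>h\<in>set gs. irreducible h"
    and "g = prod_list gs"
    and "g dvd [:-1:] + monom 1 n"
    and "\<forall>i<length gs. eval2 (gs ! i) (alphas ! i) = 0"
  shows "LCset alphas n f1 = LCset alphas n f2 \<longleftrightarrow>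
         (\<exists>k::nat. [f1 = monom 1 k * f2] (mod g))"
proof -
  have dvd_g_iff: "g dvd p \<longleftrightarrow> (\<forall>a\<in>set alphas. eval2 p a = 0)" for p
    using prod_list_dvd_iff_common_roots[OF assms(1,3,4,5,8)] assms(6) by simp
  have unity: "\<forall>a\<in>set alphas. a ^ n = 1"
    using assms(7) unfolding dvd_g_iff eval2_X_pow_minus_1[OF assms(1)] by simp
  have cong_iff: "[f1 = monom 1 k * f2] (mod g) \<longleftrightarrow> LC alphas 0 f1 = LC alphas k f2" for k
    unfolding cong_iff_dvd_diff dvd_g_iff LC_def map_eq_conv
    by (simp add: eval2_diff[OF assms(1)] eval2_mult[OF assms(1)])
  have "n > 0"
    using assms(2) by simp
  show ?thesis
    unfolding LCset_eq_range_LC[OF \<open>n > 0\<close> unity] range_LC_eq_iff[OF \<open>n > 0\<close> unity] cong_iff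
    by (rule refl)
qed

end
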